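(* Let $E$ be a regular biordered set satisfying: (E1) there exists $0\in E$ with $0\,\omega\,e$ for every $e\in E$; (E2) there is a map $e\mapsto e'$ on $E$ such that for all $e,f\in E$: (i) $(e')'=e$; (ii) $f\,\omega^l\,e$ iff $e'\,\omega^r\,f'$; (iii) $f\,\omega^l\,e'$ iff $M(f,e)=\{0\}$. Let $e,f\in E$ with $1\le d_l(e,f)\le 3$. Then $\mathcal L(e)$ and $\mathcal L(f)$ are in perspective in the lattice $L(E)=E/\mathcal L$.
   Context: A regular biordered set is a partial algebra isomorphic to the set of idempotents $E(S)$ of a regular semigroup $S$ (regular: every $x$ has $y$ with $xyx=x$), where $ef$ (computed in $S$) is defined when $\{ef,fe\}\cap\{e,f\}\ne\emptyset$. In $E$: $\omega^l=\{(e,f): ef=e\}$, $\omega^r=\{(e,f): fe=e\}$, $\omega=\omega^l\cap\omega^r$; $M(e,f)=\{g\in E: g\,\omega^l\,e,\ g\,\omega^r\,f\}$. $\mathcal L=\omega^l\cap(\omega^l)^{-1}$, $\mathcal R=\omega^r\cap(\omega^r)^{-1}$; $E/\mathcal L$ is ordered by $\mathcal L(e)\le\mathcal L(f)$ iff $e\,\omega^l\,f$ (a lattice under (E1),(E2)). Two lattice elements are in perspective if they have a common complement. An $E$-sequence of length $m\ge1$ from $e$ to $f$ is $e=x_0,\dots,x_m=f$ with $x_{i-1}\,(\mathcal L\cup\mathcal R)\,x_i$ for each $i$; $d_l(e,f)$ is the least length of such a sequence with $x_0\,\mathcal L\,x_1$, and $d_l(e,f)=0$ if none exists. *)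

theory Defs
  imports Main
begin

(* A regular biordered set is (up to isomorphism) the set of idempotents E(S)
   of a regular semigroup S. *)

definition regular_semigroup :: "'a::semigroup_mult itself \<Rightarrow> bool" where
  "regular_semigroup _ \<longleftrightarrow> (\<forall>x::'a. \<exists>y. x * y * x = x)"

definition idems :: "'a::semigroup_mult set" where
  "idems = {e. e * e = e}"

definition omega_l :: "'a::semigroup_mult \<Rightarrow> 'a \<Rightarrow> bool" where
  "omega_l e f \<longleftrightarrow> e * f = e"

definition omega_r :: "'a::semigroup_mult \<Rightarrow> 'a \<Rightarrow> bool" where
  "omega_r e f \<longleftrightarrow> f * e = e"

definition omega :: "'a::semigroup_mult \<Rightarrow> 'a \<Rightarrow> bool" where
  "omega e f \<longleftrightarrow> omega_l e f \<and> omega_r e f"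

definition Lrel :: "'a::semigroup_mult \<Rightarrow> 'a \<Rightarrow> bool" where
  "Lrel e f \<longleftrightarrow> omega_l e f \<and> omega_l f e"

definition Rrel :: "'a::semigroup_mult \<Rightarrow> 'a \<Rightarrow> bool" where
  "Rrel e f \<longleftrightarrow> omega_r e f \<and> omega_r f e"

definition Mset :: "'a::semigroup_mult \<Rightarrow> 'a \<Rightarrow> 'a set" where
  "Mset e f = {g \<in> idems. omega_l g e \<and> omega_r g f}"

definition Eseq_l :: "'a::semigroup_mult \<Rightarrow> 'a \<Rightarrow> nat \<Rightarrow> bool" where
  "Eseq_l e f m \<longleftrightarrow> m \<ge> 1 \<and> (\<exists>x::nat \<Rightarrow> 'a. x 0 = e \<and> x m = f \<and>
      (\<forall>i\<le>m. x i \<in> idems) \<and>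
      (\<forall>i\<in>{1..m}. Lrel (x (i - 1)) (x i) \<or> Rrel (x (i - 1)) (x i)) \<and>
      Lrel (x 0) (x 1))"

definition d_l :: "'a::semigroup_mult \<Rightarrow> 'a \<Rightarrow> nat" where
  "d_l e f = (if \<exists>m. Eseq_l e f m then (LEAST m. Eseq_l e f m) else 0)"

definition Lclass :: "'a::semigroup_mult \<Rightarrow> 'a set" where
  "Lclass e = {f \<in> idems. Lrel e f}"

definition Lclasses :: "'a::semigroup_mult set set" where
  "Lclasses = Lclass ` idems"

definition Lle :: "'a::semigroup_mult set \<Rightarrow> 'a set \<Rightarrow> bool" where
  "Lle A B \<longleftrightarrow> (\<exists>a\<in>A. \<exists>b\<in>B. omega_l a b)"

definition is_complement :: "'a::semigroup_mult set \<Rightarrow> 'a set \<Rightarrow> bool" where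
  "is_complement A C \<longleftrightarrow>
     (\<exists>bot\<in>Lclasses. (\<forall>X\<in>Lclasses. Lle bot X) \<and>
        (\<forall>X\<in>Lclasses. Lle X A \<and> Lle X C \<longrightarrow> X = bot)) \<and>
     (\<exists>top\<in>Lclasses. (\<forall>X\<in>Lclasses. Lle X top) \<and>
        (\<forall>X\<in>Lclasses. Lle A X \<and> Lle C X \<longrightarrow> X = top))"

definition in_perspective :: "'a::semigroup_mult set \<Rightarrow> 'a set \<Rightarrow> bool" where
  "in_perspective A B \<longleftrightarrow> (\<exists>C\<in>Lclasses. is_complement A C \<and> is_complement B C)"

end

theory Submission
  imports Defs
begin

(* An E-sequence of length at most 3 that starts with an L-step collapses, by
   transitivity of L and R, to the shape e L y R w L f.  The involution e \<mapsto> e' reverses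
   \<omega>\<^sup>l into \<omega>\<^sup>r, hence turns y R w into y' L w'.  Every L(x) has the
   complement L(x'): the meet is L(0) because for h below x and x' the product
   x h lies in M(h, x) = {0}, so h = h x h = h 0; the join is L(0') by the dual
   argument applied to h'.  Therefore L(e) = L(y) and L(f) = L(w) have the common complement
   L(y') = L(w'). *)

lemma Lrel_idems:
  assumes "Lrel e f"
  shows "f \<in> idems"
proof -
  have "e * f = e" "f * e = f" using assms by (simp_all add: Lrel_def omega_l_def)
  then have "f * f = f * e" by (metis mult.assoc)
  then show ?thesis using \<open>f * e = f\<close> by (simp add: idems_def)
qed

lemma Rrel_idems:
  assumes "Rrel e f"
  shows "f \<in> idems"
proof -
  have "f * e = e" "e * f = f" using assms by (simp_all add: Rrel_def omega_r_def)
  then have "f * f = e * f" by (metis mult.assoc)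
  then show ?thesis using \<open>e * f = f\<close> by (simp add: idems_def)
qed

lemma Lrel_refl: "e \<in> idems \<Longrightarrow> Lrel e e"
  by (simp add: Lrel_def omega_l_def idems_def)

lemma Rrel_refl: "e \<in> idems \<Longrightarrow> Rrel e e"
  by (simp add: Rrel_def omega_r_def idems_def)

lemma Lrel_sym: "Lrel e f \<Longrightarrow> Lrel f e"
  by (simp add: Lrel_def)

lemma Rrel_sym: "Rrel e f \<Longrightarrow> Rrel f e"
  by (simp add: Rrel_def)

lemma Lrel_trans: "Lrel e f \<Longrightarrow> Lrel f g \<Longrightarrow> Lrel e g"
  unfolding Lrel_def omega_l_def by (metis mult.assoc)

lemma Rrel_trans: "Rrel e f \<Longrightarrow> Rrel f g \<Longrightarrow> Rrel e g"
  unfolding Rrel_def omega_r_def by (metis mult.assoc)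

lemma Lclass_eq: "Lrel e f \<Longrightarrow> Lclass e = Lclass f"
  unfolding Lclass_def using Lrel_trans Lrel_sym by blast

lemma Lclass_in_Lclasses: "e \<in> idems \<Longrightarrow> Lclass e \<in> Lclasses"
  by (simp add: Lclasses_def)

lemma Lle_Lclass_iff:
  assumes "e \<in> idems" "f \<in> idems"
  shows "Lle (Lclass e) (Lclass f) \<longleftrightarrow> omega_l e f"
proof
  assume "Lle (Lclass e) (Lclass f)"
  then obtain a b where "Lrel e a" "Lrel f b" "omega_l a b"
    unfolding Lle_def Lclass_def by blast
  then show "omega_l e f"
    unfolding Lrel_def omega_l_def by (metis mult.assoc)
next
  assume "omega_l e f"
  then show "Lle (Lclass e) (Lclass f)"
    unfolding Lle_def Lclass_def using assms Lrel_refl by blast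
qed

lemma is_complement_LclassI:
  assumes idems: "x \<in> idems" "y \<in> idems" "b \<in> idems" "t \<in> idems"
    and bot: "\<And>h. h \<in> idems \<Longrightarrow> omega_l b h"
    and top: "\<And>h. h \<in> idems \<Longrightarrow> omega_l h t"
    and meet: "\<And>h. h \<in> idems \<Longrightarrow> omega_l h x \<Longrightarrow> omega_l h y \<Longrightarrow> Lrel h b"
    and join: "\<And>h. h \<in> idems \<Longrightarrow> omega_l x h \<Longrightarrow> omega_l y h \<Longrightarrow> Lrel h t"
  shows "is_complement (Lclass x) (Lclass y)"
  unfolding is_complement_def
proof (intro conjI bexI ballI impI)
  show "Lclass b \<in> Lclasses" "Lclass t \<in> Lclasses"
    using idems by (simp_all add: Lclass_in_Lclasses)
  fix X :: "'a set" assume "X \<in> Lclasses"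
  then obtain h where h: "h \<in> idems" "X = Lclass h"
    unfolding Lclasses_def by blast
  show "Lle (Lclass b) X" "Lle X (Lclass t)"
    using h idems bot top by (simp_all add: Lle_Lclass_iff)
  show "X = Lclass b" if "Lle X (Lclass x) \<and> Lle X (Lclass y)"
  proof -
    have "Lrel h b" using that h idems meet by (simp add: Lle_Lclass_iff)
    then show ?thesis using h Lclass_eq by simp
  qed
  show "X = Lclass t" if "Lle (Lclass x) X \<and> Lle (Lclass y) X"
  proof -
    have "Lrel h t" using that h idems join by (simp add: Lle_Lclass_iff)
    then show ?thesis using h Lclass_eq by simp
  qed
qed

definition LRL_connected :: "'a::semigroup_mult \<Rightarrow> 'a \<Rightarrow> bool" where
  "LRL_connected e f \<longleftrightarrow> (\<exists>y w. Lrel e y \<and> Rrel y w \<and> Lrel w f)"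

lemma Rrel_after_Lrel_step:
  assumes "Lrel e a" "Lrel a b \<or> Rrel a b"
  shows "\<exists>y. Lrel e y \<and> Rrel y b"
  using assms by (blast intro: Lrel_trans Rrel_refl Lrel_idems)

lemma LRL_connectedI:
  assumes "Lrel e y" "Rrel y a" "Lrel a f \<or> Rrel a f"
  shows "LRL_connected e f"
  using assms unfolding LRL_connected_def
  by (blast intro: Rrel_trans Lrel_refl Rrel_idems)

lemma Eseq_l_LRL_connected:
  assumes seq: "Eseq_l e f m" and "m \<le> 3"
  shows "LRL_connected e f"
proof -
  obtain x where xm: "x m = f"
    and step: "\<And>i. i \<in> {1..m} \<Longrightarrow> Lrel (x (i - 1)) (x i) \<or> Rrel (x (i - 1)) (x i)"
    and first: "Lrel e (x 1)"
    using seq unfolding Eseq_l_def by blast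
  have "m = 1 \<or> m = 2 \<or> m = 3"
    using seq \<open>m \<le> 3\<close> unfolding Eseq_l_def by auto
  then consider "m = 1" | "m = 2" | "m = 3" by blast
  then show ?thesis
  proof cases
    case 1
    then have "Lrel e f" using first xm by simp
    then show ?thesis
      using LRL_connectedI Lrel_idems Rrel_refl by blast
  next
    case 2
    with step[of 2] have "Lrel (x 1) f \<or> Rrel (x 1) f"
      using xm by simp
    then show ?thesis
      using LRL_connectedI first Lrel_idems Rrel_refl by blast
  next
    case 3
    with step[of 2] step[of 3] have
      "Lrel (x 1) (x 2) \<or> Rrel (x 1) (x 2)" "Lrel (x 2) f \<or> Rrel (x 2) f"
      using xm by simp_all
    then show ?thesis
      using first Rrel_after_Lrel_step LRL_connectedI by blast
  qed
qed

lemma Eseq_l_d_l: "d_l e f \<noteq> 0 \<Longrightarrow> Eseq_l e f (d_l e f)"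
  unfolding d_l_def by (auto intro: LeastI_ex split: if_splits)

locale complemented_idempotents =
  fixes z :: "'a::semigroup_mult" and c :: "'a \<Rightarrow> 'a"
  assumes zero_idems: "z \<in> idems"
    and zero_omega: "\<forall>g\<in>idems. omega z g"
    and c_idems: "\<forall>g\<in>idems. c g \<in> idems"
    and c_c: "\<forall>g\<in>idems. c (c g) = g"
    and omega_l_iff_c: "\<forall>g\<in>idems. \<forall>h\<in>idems. omega_l h g \<longleftrightarrow> omega_r (c g) (c h)"
    and omega_l_c_iff_Mset: "\<forall>g\<in>idems. \<forall>h\<in>idems. omega_l h (c g) \<longleftrightarrow> Mset h g = {z}"
begin

lemma zero_mult: "g \<in> idems \<Longrightarrow> z * g = z"
  using zero_omega by (simp add: omega_def omega_l_def)

lemma omega_l_c_zero: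
  assumes h: "h \<in> idems"
  shows "omega_l h (c z)"
proof -
  have "Mset h z = {z}"
    using h zero_idems zero_mult
    by (auto simp: Mset_def omega_l_def omega_r_def idems_def)
  then show ?thesis
    using omega_l_c_iff_Mset h zero_idems by blast
qed

lemma Lrel_zero_if_below_both:
  assumes x: "x \<in> idems" and h: "h \<in> idems"
    and hx: "omega_l h x" and hcx: "omega_l h (c x)"
  shows "Lrel h z"
proof -
  have "h * x = h" using hx by (simp add: omega_l_def)
  then have "x * h \<in> Mset h x"
    using h x by (simp add: Mset_def omega_l_def omega_r_def idems_def mult.assoc)
      (metis mult.assoc)
  moreover have "Mset h x = {z}"
    using omega_l_c_iff_Mset hcx h x by blast
  ultimately have "x * h = z" by blast
  then have "h * z = (h * x) * h" by (simp add: mult.assoc)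
  also have "\<dots> = h" using \<open>h * x = h\<close> h by (simp add: idems_def)
  finally show ?thesis
    using zero_mult h by (simp add: Lrel_def omega_l_def)
qed

lemma eq_c_zero_if_above_both:
  assumes x: "x \<in> idems" and h: "h \<in> idems"
    and xh: "omega_l x h" and cxh: "omega_l (c x) h"
  shows "h = c z"
proof -
  define k where "k = c h"
  have k: "k * k = k" using c_idems h by (simp add: k_def idems_def)
  have "omega_r k (c x)"
    using omega_l_iff_c xh x h by (simp add: k_def)
  then have cxk: "c x * k = k" by (simp add: omega_r_def)
  have "omega_r k x"
    using omega_l_iff_c cxh c_idems c_c x h by (metis k_def)
  then have xk: "x * k = k" by (simp add: omega_r_def)
  define k' where "k' = k * x"
  have k'_idems: "k' \<in> idems"
    using xk k by (simp add: k'_def idems_def) (metis mult.assoc)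
  have "omega_r k' (c x)"
    using cxk by (simp add: k'_def omega_r_def mult.assoc[symmetric])
  then have "omega_l x (c k')"
    using omega_l_iff_c c_idems c_c k'_idems x by metis
  then have "Mset x k' = {z}"
    using omega_l_c_iff_Mset k'_idems x by blast
  moreover have "k' \<in> Mset x k'"
    using k'_idems x by (auto simp: Mset_def omega_l_def omega_r_def idems_def k'_def mult.assoc)
  ultimately have "k' = z" by blast
  have "k = k' * k" using xk k by (simp add: k'_def mult.assoc)
  then have "c h = z"
    using \<open>k' = z\<close> zero_mult c_idems h by (simp add: k_def)
  then show ?thesis using c_c h by force
qed

lemma is_complement_Lclass_c:
  assumes "x \<in> idems"
  shows "is_complement (Lclass x) (Lclass (c x))"
proof (rule is_complement_LclassI)
  show "x \<in> idems" "c x \<in> idems" "z \<in> idems" "c z \<in> idems"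
    using assms zero_idems c_idems by auto
  show "omega_l z h" if "h \<in> idems" for h
    using zero_mult that by (simp add: omega_l_def)
  show "omega_l h (c z)" if "h \<in> idems" for h
    using omega_l_c_zero that .
  show "Lrel h z" if "h \<in> idems" "omega_l h x" "omega_l h (c x)" for h
    using Lrel_zero_if_below_both assms that by blast
  show "Lrel h (c z)" if "h \<in> idems" "omega_l x h" "omega_l (c x) h" for h
    using eq_c_zero_if_above_both assms that Lrel_refl by blast
qed

lemma Lrel_c_if_Rrel:
  assumes "Rrel y w"
  shows "Lrel (c y) (c w)"
proof -
  have y: "y \<in> idems" and w: "w \<in> idems"
    using assms Rrel_idems Rrel_sym by blast+
  with assms show ?thesis
    using omega_l_iff_c c_idems c_c unfolding Lrel_def Rrel_def by metis
qed

lemma in_perspective_if_LRL_connected: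
  fixes e f :: 'a
  assumes "LRL_connected e f"
  shows "in_perspective (Lclass e) (Lclass f)"
proof -
  obtain y w where ey: "Lrel e y" and yw: "Rrel y w" and wf: "Lrel w f"
    using assms unfolding LRL_connected_def by blast
  have y: "y \<in> idems" and w: "w \<in> idems"
    using ey wf Lrel_idems Lrel_sym by blast+
  have "is_complement (Lclass e) (Lclass (c y))"
    using is_complement_Lclass_c[OF y] Lclass_eq[OF ey] by simp
  moreover have "is_complement (Lclass f) (Lclass (c y))"
    using is_complement_Lclass_c[OF w] Lclass_eq[OF Lrel_sym[OF wf]]
      Lclass_eq[OF Lrel_c_if_Rrel[OF yw]] by simp
  ultimately show ?thesis
    unfolding in_perspective_def using c_idems y Lclass_in_Lclasses by blast
qed

end

theorem proposition5p6:
  fixes z :: "'a::semigroup_mult" and c :: "'a \<Rightarrow> 'a" and e f :: 'a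
  assumes reg: "regular_semigroup TYPE('a)"
    and E1: "z \<in> idems" "\<forall>g\<in>idems. omega z g"
    and E2map: "\<forall>g\<in>idems. c g \<in> idems"
    and E2i: "\<forall>g\<in>idems. c (c g) = g"
    and E2ii: "\<forall>g\<in>idems. \<forall>h\<in>idems. omega_l h g \<longleftrightarrow> omega_r (c g) (c h)"
    and E2iii: "\<forall>g\<in>idems. \<forall>h\<in>idems. omega_l h (c g) \<longleftrightarrow> Mset h g = {z}"
    and ef: "e \<in> idems" "f \<in> idems"
    and d: "1 \<le> d_l e f" "d_l e f \<le> 3"
  shows "in_perspective (Lclass e) (Lclass f)"
proof -
  interpret complemented_idempotents z c
    using E1 E2map E2i E2ii E2iii by unfold_locales
  have "Eseq_l e f (d_l e f)"
    using d(1) by (simp add: Eseq_l_d_l)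
  then have "LRL_connected e f"
    using d(2) by (rule Eseq_l_LRL_connected)
  then show ?thesis
    by (rule in_perspective_if_LRL_connected)
qed

end
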